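(* Let $A$ be a bialgebra over a commutative ring $\Bbbk$ with coproduct $\Delta_A$ and counit $\varepsilon$. Identify $\mathrm{Ext}^1_A(\Bbbk,\Bbbk)=HH^1(A,\Bbbk)=\mathrm{Der}(A,\Bbbk)$ and $HH^1(A,A)=\mathrm{Der}(A,A)/\{\text{inner derivations}\}$. Then the inclusion of Lie algebras $\mathrm{Ext}^1_A(\Bbbk,\Bbbk)\hookrightarrow HH^1(A,A)$ (the degree $1$ part of the injective morphism of Gerstenhaber algebras $\mathrm{Ext}^*_A(\Bbbk,\Bbbk)\hookrightarrow HH^*(A,A)$ induced by $lift$) is the composite of Lie algebra morphisms $$\mathrm{Der}(A,\Bbbk)\xrightarrow{i}\mathrm{Der}(A,A)\xrightarrow{q}\mathrm{Der}(A,A)/\{\text{inner derivations}\},$$ where $q$ is the quotient map and $i(f)=(A\otimes f)\circ\Delta_A$.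
   Context: A derivation $f:A\to M$ into an $A$-bimodule satisfies $f(ab)=f(a)b+af(b)$; inner derivations are $a\mapsto am-ma$; $\Bbbk$ is an $A$-bimodule via $\varepsilon$. The injective morphism of Gerstenhaber algebras $\mathrm{Ext}^*_A(\Bbbk,\Bbbk)\hookrightarrow HH^*(A,A)$ is induced by $lift:\mathrm{Hom}(A^{\otimes n},\Bbbk)\to\mathrm{Hom}(A^{\otimes n},A)$, $lift(f)(a_1\otimes\dots\otimes a_n)=a_1^{(1)}\cdots a_n^{(1)}f(a_1^{(2)}\otimes\dots\otimes a_n^{(2)})$, where $\mathrm{Ext}^*_A(\Bbbk,\Bbbk)$ carries the Gerstenhaber structure from the operad with multiplication $\mathcal{O}^A(n)=\mathrm{Hom}(A^{\otimes n},\Bbbk)$ with $(f\circ_ig)(a_1\otimes\dots\otimes a_{m+n-1})=f(a_1\otimes\dots\otimes a_{i-1}\otimes a_i^{(1)}\cdots a_{i+n-1}^{(1)}g(a_i^{(2)}\otimes\dots\otimes a_{i+n-1}^{(2)})\otimes a_{i+n}\otimes\dots)$, identity $\varepsilon$, multiplication $\varepsilon\circ\mu$, $e=\mathrm{id}_\Bbbk$, and $HH^*(A,A)$ carries the usual Gerstenhaber structure from the endomorphism operad $\mathrm{Hom}(A^{\otimes n},A)$. On degree $1$ the Gerstenhaber bracket of an operad with multiplication is $\{f,g\}=f\circ_1g-g\circ_1f$. *)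

theory Defs
  imports Main
begin

definition k_algebra :: "('k::comm_ring_1 \<Rightarrow> 'a::ring_1 \<Rightarrow> 'a) \<Rightarrow> bool" where
  "k_algebra smul \<longleftrightarrow>
     (\<forall>s a b. smul s (a + b) = smul s a + smul s b) \<and>
     (\<forall>s t a. smul (s + t) a = smul s a + smul t a) \<and>
     (\<forall>s t a. smul (s * t) a = smul s (smul t a)) \<and>
     (\<forall>a. smul 1 a = a) \<and>
     (\<forall>s a b. smul s (a * b) = smul s a * b) \<and>
     (\<forall>s a b. smul s (a * b) = a * smul s b)"

text \<open>A formal sum  x_1 (x) ... (x) x_n + ...  of elementary
tensors is represented by a list of length-n lists; tens_eq is the congruence on such
formal sums generated by multilinearity and k-balancedness, so that the quotient of the
length-n formal sums is exactly the n-fold tensor product A (x)_k ... (x)_k A (n >= 1).\<close>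

inductive tens_eq :: "('k \<Rightarrow> 'a::ring_1 \<Rightarrow> 'a) \<Rightarrow> 'a list list \<Rightarrow> 'a list list \<Rightarrow> bool"
  for smul where
  refl: "tens_eq smul u u"
| sym: "tens_eq smul u v \<Longrightarrow> tens_eq smul v u"
| trans: "tens_eq smul u v \<Longrightarrow> tens_eq smul v w \<Longrightarrow> tens_eq smul u w"
| comm: "tens_eq smul (u @ v) (v @ u)"
| cong: "tens_eq smul u v \<Longrightarrow> tens_eq smul (u @ w) (v @ w)"
| add: "tens_eq smul [xs @ (x + y) # ys] [xs @ x # ys, xs @ y # ys]"
| zero: "tens_eq smul [xs @ 0 # ys] []"
| bal: "tens_eq smul [xs @ smul s x # y # ys] [xs @ x # smul s y # ys]"

definition T2 :: "('a \<times> 'a) list \<Rightarrow> 'a list list" where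
  "T2 u = map (\<lambda>(x, y). [x, y]) u"

text \<open>A k-bialgebra: Delta a is a representative (Sweedler sum  sum a(1) (x) a(2)) of the
coproduct of a in A (x) A; eps is the counit.\<close>

definition bialgebra ::
  "('k::comm_ring_1 \<Rightarrow> 'a::ring_1 \<Rightarrow> 'a) \<Rightarrow> ('a \<Rightarrow> ('a \<times> 'a) list) \<Rightarrow> ('a \<Rightarrow> 'k) \<Rightarrow> bool" where
  "bialgebra smul Delta eps \<longleftrightarrow>
     k_algebra smul \<and>
     \<comment> \<open>Delta is k-linear\<close>
     (\<forall>a b. tens_eq smul (T2 (Delta (a + b))) (T2 (Delta a) @ T2 (Delta b))) \<and>
     (\<forall>s a. tens_eq smul (T2 (Delta (smul s a))) (map (\<lambda>(x, y). [smul s x, y]) (Delta a))) \<and>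
     \<comment> \<open>eps is k-linear\<close>
     (\<forall>a b. eps (a + b) = eps a + eps b) \<and>
     (\<forall>s a. eps (smul s a) = s * eps a) \<and>
     \<comment> \<open>coassociativity\<close>
     (\<forall>a. tens_eq smul
        (concat (map (\<lambda>(x, y). map (\<lambda>(x1, x2). [x1, x2, y]) (Delta x)) (Delta a)))
        (concat (map (\<lambda>(x, y). map (\<lambda>(y1, y2). [x, y1, y2]) (Delta y)) (Delta a)))) \<and>
     \<comment> \<open>counit axioms\<close>
     (\<forall>a. (\<Sum>(x, y)\<leftarrow>Delta a. smul (eps x) y) = a) \<and>
     (\<forall>a. (\<Sum>(x, y)\<leftarrow>Delta a. smul (eps y) x) = a) \<and>
     \<comment> \<open>Delta and eps are algebra maps\<close>
     (\<forall>a b. tens_eq smul (T2 (Delta (a * b)))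
        (concat (map (\<lambda>(x, y). map (\<lambda>(x', y'). [x * x', y * y']) (Delta b)) (Delta a)))) \<and>
     tens_eq smul (T2 (Delta 1)) [[1, 1]] \<and>
     (\<forall>a b. eps (a * b) = eps a * eps b) \<and>
     eps 1 = 1"

definition Der_Ak :: "('k::comm_ring_1 \<Rightarrow> 'a::ring_1 \<Rightarrow> 'a) \<Rightarrow> ('a \<Rightarrow> 'k) \<Rightarrow> ('a \<Rightarrow> 'k) \<Rightarrow> bool" where
  "Der_Ak smul eps f \<longleftrightarrow>
     (\<forall>a b. f (a + b) = f a + f b) \<and> (\<forall>s a. f (smul s a) = s * f a) \<and>
     (\<forall>a b. f (a * b) = f a * eps b + eps a * f b)"

definition Der_AA :: "('k::comm_ring_1 \<Rightarrow> 'a::ring_1 \<Rightarrow> 'a) \<Rightarrow> ('a \<Rightarrow> 'a) \<Rightarrow> bool" where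
  "Der_AA smul D \<longleftrightarrow>
     (\<forall>a b. D (a + b) = D a + D b) \<and> (\<forall>s a. D (smul s a) = smul s (D a)) \<and>
     (\<forall>a b. D (a * b) = D a * b + a * D b)"

definition inner_der :: "('a::ring_1 \<Rightarrow> 'a) \<Rightarrow> bool" where
  "inner_der D \<longleftrightarrow> (\<exists>m. \<forall>a. D a = a * m - m * a)"

text \<open>Equality in HH^1(A,A) = Der(A,A)/inner derivations, i.e. q D = q E.\<close>
definition hh1_eq :: "('a::ring_1 \<Rightarrow> 'a) \<Rightarrow> ('a \<Rightarrow> 'a) \<Rightarrow> bool" where
  "hh1_eq D E \<longleftrightarrow> inner_der (\<lambda>a. D a - E a)"

definition incl :: "('k \<Rightarrow> 'a::ring_1 \<Rightarrow> 'a) \<Rightarrow> ('a \<Rightarrow> ('a \<times> 'a) list) \<Rightarrow> ('a \<Rightarrow> 'k) \<Rightarrow> 'a \<Rightarrow> 'a" where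
  "incl smul Delta f = (\<lambda>a. \<Sum>(x, y)\<leftarrow>Delta a. smul (f y) x)"

definition lift1 :: "('k \<Rightarrow> 'a::ring_1 \<Rightarrow> 'a) \<Rightarrow> ('a \<Rightarrow> ('a \<times> 'a) list) \<Rightarrow> ('a \<Rightarrow> 'k) \<Rightarrow> 'a \<Rightarrow> 'a" where
  "lift1 smul Delta f a = (\<Sum>(x, y)\<leftarrow>Delta a. smul (f y) x)"

definition circ1_k :: "('k \<Rightarrow> 'a::ring_1 \<Rightarrow> 'a) \<Rightarrow> ('a \<Rightarrow> ('a \<times> 'a) list) \<Rightarrow> ('a \<Rightarrow> 'k) \<Rightarrow> ('a \<Rightarrow> 'k) \<Rightarrow> 'a \<Rightarrow> 'k" where
  "circ1_k smul Delta f g a = f (\<Sum>(x, y)\<leftarrow>Delta a. smul (g y) x)"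

definition brk_k :: "('k::comm_ring_1 \<Rightarrow> 'a::ring_1 \<Rightarrow> 'a) \<Rightarrow> ('a \<Rightarrow> ('a \<times> 'a) list) \<Rightarrow> ('a \<Rightarrow> 'k) \<Rightarrow> ('a \<Rightarrow> 'k) \<Rightarrow> 'a \<Rightarrow> 'k" where
  "brk_k smul Delta f g a = circ1_k smul Delta f g a - circ1_k smul Delta g f a"

definition brk_A :: "('a::ring_1 \<Rightarrow> 'a) \<Rightarrow> ('a \<Rightarrow> 'a) \<Rightarrow> 'a \<Rightarrow> 'a" where
  "brk_A D E a = D (E a) - E (D a)"

end

theory Submission
  imports Defs
begin

text \<open>Every map built from a coproduct is evaluated by summing a multilinear, k-balanced
function over the Sweedler representative; such sums are invariant under the tensor
congruence, which is how the bialgebra axioms (stated up to that congruence) are used.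
With i(f)(a) = a(1) f(a(2)): multiplicativity of the coproduct and the counit axiom make
i(f) a derivation; coassociativity gives i(f) o i(g) = i(f o_1 g), hence i preserves
brackets; the counit gives eps o i(f) = f, and eps kills every inner derivation
a m - m a, so q o i is injective. The bracket of derivations descends to the quotient
because [D + ad m, E + ad n] = [D, E] + ad (D n - E m + [n, m]).\<close>

lemma additive_zero:
  fixes f :: "'a::group_add \<Rightarrow> 'b::group_add"
  assumes "\<And>a b. f (a + b) = f a + f b"
  shows "f 0 = 0"
  using assms[of 0 0] by (metis add_left_cancel add.right_neutral)

lemma additive_diff:
  fixes f :: "'a::group_add \<Rightarrow> 'b::group_add"
  assumes "\<And>a b. f (a + b) = f a + f b"
  shows "f (a - b) = f a - f b"
  using assms[of "a - b" b] by (simp add: eq_diff_eq)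

lemma additive_sum_list:
  fixes f :: "'a::ab_group_add \<Rightarrow> 'b::ab_group_add"
  assumes "\<And>a b. f (a + b) = f a + f b"
  shows "f (\<Sum>p\<leftarrow>L. g p) = (\<Sum>p\<leftarrow>L. f (g p))"
  by (induct L) (auto simp: assms additive_zero[OF assms])

lemma sum_list_concat_map:
  "(\<Sum>l\<leftarrow>concat xss. \<phi> l) = (\<Sum>xs\<leftarrow>xss. \<Sum>l\<leftarrow>xs. \<phi> l)"
  by (induct xss) auto

lemma sum_list_mult_sum_list:
  fixes F G :: "_ \<Rightarrow> 'r::ring"
  shows "(\<Sum>p\<leftarrow>L1. \<Sum>q\<leftarrow>L2. F p * G q) = (\<Sum>p\<leftarrow>L1. F p) * (\<Sum>q\<leftarrow>L2. G q)"
  by (induct L1) (auto simp: distrib_right sum_list_const_mult)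

lemma tens_eq_sum_list_eq:
  fixes \<phi> :: "'a::ring_1 list \<Rightarrow> 'b::ab_group_add"
  assumes "tens_eq smul u v"
    and "\<And>xs x y ys. \<phi> (xs @ (x + y) # ys) = \<phi> (xs @ x # ys) + \<phi> (xs @ y # ys)"
    and "\<And>xs ys. \<phi> (xs @ 0 # ys) = 0"
    and "\<And>xs s x y ys. \<phi> (xs @ smul s x # y # ys) = \<phi> (xs @ x # smul s y # ys)"
  shows "(\<Sum>l\<leftarrow>u. \<phi> l) = (\<Sum>l\<leftarrow>v. \<phi> l)"
  using assms(1) by induction (auto simp: assms(2-) add_ac)

definition tensor_eval2 :: "('a \<Rightarrow> 'a \<Rightarrow> 'b::zero) \<Rightarrow> 'a list \<Rightarrow> 'b" where
  "tensor_eval2 h l = (case l of [x, y] \<Rightarrow> h x y | _ \<Rightarrow> 0)"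

definition tensor_eval3 :: "('a \<Rightarrow> 'a \<Rightarrow> 'a \<Rightarrow> 'b::zero) \<Rightarrow> 'a list \<Rightarrow> 'b" where
  "tensor_eval3 h l = (case l of [x, y, z] \<Rightarrow> h x y z | _ \<Rightarrow> 0)"

lemma tensor_eval2_append_Cons:
  "tensor_eval2 h (xs @ z # ys) =
    (if xs = [] \<and> length ys = 1 then h z (hd ys)
     else if length xs = 1 \<and> ys = [] then h (hd xs) z else 0)"
  unfolding tensor_eval2_def by (cases xs; cases ys; auto split: list.splits)

lemma tensor_eval3_append_Cons:
  "tensor_eval3 h (xs @ z # ys) =
    (if xs = [] \<and> length ys = 2 then h z (hd ys) (hd (tl ys))
     else if length xs = 1 \<and> length ys = 1 then h (hd xs) z (hd ys)
     else if length xs = 2 \<and> ys = [] then h (hd xs) (hd (tl xs)) z else 0)"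
  unfolding tensor_eval3_def
  apply (cases xs; cases ys)
     apply (auto split: list.splits simp: length_Suc_conv)
   apply (drule arg_cong[where f = length], simp)+
  done

lemma tens_eq_tensor_eval2:
  fixes h :: "'a::ring_1 \<Rightarrow> 'a \<Rightarrow> 'b::ab_group_add"
  assumes "tens_eq smul u v"
    and "\<And>x x' y. h (x + x') y = h x y + h x' y"
    and "\<And>x y y'. h x (y + y') = h x y + h x y'"
    and "\<And>y. h 0 y = 0" and "\<And>x. h x 0 = 0"
    and "\<And>s x y. h (smul s x) y = h x (smul s y)"
  shows "(\<Sum>l\<leftarrow>u. tensor_eval2 h l) = (\<Sum>l\<leftarrow>v. tensor_eval2 h l)"
  by (rule tens_eq_sum_list_eq[OF assms(1)]) (use assms(2-) in \<open>auto simp: tensor_eval2_append_Cons\<close>)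

lemma tens_eq_tensor_eval3:
  fixes h :: "'a::ring_1 \<Rightarrow> 'a \<Rightarrow> 'a \<Rightarrow> 'b::ab_group_add"
  assumes "tens_eq smul u v"
    and "\<And>x x' y z. h (x + x') y z = h x y z + h x' y z"
    and "\<And>x y y' z. h x (y + y') z = h x y z + h x y' z"
    and "\<And>x y z z'. h x y (z + z') = h x y z + h x y z'"
    and "\<And>y z. h 0 y z = 0" and "\<And>x z. h x 0 z = 0" and "\<And>x y. h x y 0 = 0"
    and "\<And>s x y z. h (smul s x) y z = h x (smul s y) z"
    and "\<And>s x y z. h x (smul s y) z = h x y (smul s z)"
  shows "(\<Sum>l\<leftarrow>u. tensor_eval3 h l) = (\<Sum>l\<leftarrow>v. tensor_eval3 h l)"
  by (rule tens_eq_sum_list_eq[OF assms(1)]) (use assms(2-) in \<open>auto simp: tensor_eval3_append_Cons\<close>)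

lemma sum_list_tensor_eval2_T2: "(\<Sum>l\<leftarrow>T2 L. tensor_eval2 h l) = (\<Sum>(x, y)\<leftarrow>L. h x y)"
  by (induct L) (auto simp: T2_def tensor_eval2_def)

lemma Der_Ak_add: "Der_Ak smul eps f \<Longrightarrow> f (a + b) = f a + f b"
  and Der_Ak_smul: "Der_Ak smul eps f \<Longrightarrow> f (smul s a) = s * f a"
  and Der_Ak_mult: "Der_Ak smul eps f \<Longrightarrow> f (a * b) = f a * eps b + eps a * f b"
  unfolding Der_Ak_def by blast+

lemma Der_AA_add: "Der_AA smul D \<Longrightarrow> D (a + b) = D a + D b"
  and Der_AA_smul: "Der_AA smul D \<Longrightarrow> D (smul s a) = smul s (D a)"
  and Der_AA_mult: "Der_AA smul D \<Longrightarrow> D (a * b) = D a * b + a * D b"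
  unfolding Der_AA_def by blast+

lemma hh1_eq_refl: "hh1_eq D D"
  unfolding hh1_eq_def inner_der_def by (rule exI[of _ 0]) simp

lemma hh1_eq_brk_A:
  assumes D': "Der_AA smul D'" and E': "Der_AA smul E'"
    and "hh1_eq D D'" and "hh1_eq E E'"
  shows "hh1_eq (brk_A D E) (brk_A D' E')"
proof -
  obtain m where m: "\<And>a. D a - D' a = a * m - m * a"
    using \<open>hh1_eq D D'\<close> unfolding hh1_eq_def inner_der_def by blast
  obtain n where n: "\<And>a. E a - E' a = a * n - n * a"
    using \<open>hh1_eq E E'\<close> unfolding hh1_eq_def inner_der_def by blast
  have D: "D x = D' x + x * m - m * x" and E: "E x = E' x + x * n - n * x" for x
    using m[of x] n[of x] by (simp_all add: algebra_simps)
  have D'_diff: "D' (x - y) = D' x - D' y" and E'_diff: "E' (x - y) = E' x - E' y" for x y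
    by (rule additive_diff, rule Der_AA_add[OF D'] Der_AA_add[OF E'])+
  have "D (E a) - E (D a) - (D' (E' a) - E' (D' a))
        = a * (D' n - E' m + n * m - m * n) - (D' n - E' m + n * m - m * n) * a" for a
    unfolding D E D'_diff E'_diff Der_AA_add[OF D'] Der_AA_add[OF E']
      Der_AA_mult[OF D'] Der_AA_mult[OF E']
    by (simp add: algebra_simps)
  then show ?thesis
    unfolding hh1_eq_def inner_der_def brk_A_def by blast
qed

locale algebra_over =
  fixes smul :: "'k::comm_ring_1 \<Rightarrow> 'a::ring_1 \<Rightarrow> 'a"
  assumes k_algebra: "k_algebra smul"
begin

lemma smul_add_right: "smul s (a + b) = smul s a + smul s b"
  and smul_add_left: "smul (s + t) a = smul s a + smul t a"
  and smul_smul: "smul (s * t) a = smul s (smul t a)"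
  and smul_mult_left: "smul s (a * b) = smul s a * b"
  and smul_mult_right: "smul s (a * b) = a * smul s b"
  using k_algebra unfolding k_algebra_def by blast+

lemma smul_zero_right: "smul s 0 = 0"
  by (rule additive_zero, rule smul_add_right)

lemma smul_zero_left: "smul 0 a = 0"
  by (rule additive_zero[of "\<lambda>s. smul s a"], rule smul_add_left)

lemma smul_diff_left: "smul (s - t) a = smul s a - smul t a"
  by (rule additive_diff[of "\<lambda>s. smul s a"], rule smul_add_left)

lemma smul_sum_list_right: "smul s (\<Sum>p\<leftarrow>L. g p) = (\<Sum>p\<leftarrow>L. smul s (g p))"
  by (rule additive_sum_list, rule smul_add_right)

lemma smul_sum_list_left: "smul (\<Sum>p\<leftarrow>L. g p) a = (\<Sum>p\<leftarrow>L. smul (g p) a)"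
  by (rule additive_sum_list[of "\<lambda>s. smul s a"], rule smul_add_left)

lemma smul_mult_smul: "smul s x * smul t y = smul (s * t) (x * y)"
  by (metis smul_smul smul_mult_left smul_mult_right mult.commute)

lemma incl_add: "incl smul Delta (\<lambda>a. f a + g a) = (\<lambda>a. incl smul Delta f a + incl smul Delta g a)"
  and incl_diff: "incl smul Delta (\<lambda>a. f a - g a) = (\<lambda>a. incl smul Delta f a - incl smul Delta g a)"
  and incl_scale: "incl smul Delta (\<lambda>a. s * f a) = (\<lambda>a. smul s (incl smul Delta f a))"
  by (auto simp: incl_def case_prod_unfold smul_add_left smul_diff_left sum_list_addf
      sum_list_subtractf smul_sum_list_right smul_smul)

lemma tens_eq_sum_list_incl:
  assumes "\<And>a b. f (a + b) = f a + f b" and "\<And>s a. f (smul s a) = s * f a"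
    and "tens_eq smul u v"
  shows "(\<Sum>l\<leftarrow>u. tensor_eval2 (\<lambda>x y. smul (f y) x) l)
       = (\<Sum>l\<leftarrow>v. tensor_eval2 (\<lambda>x y. smul (f y) x) l)"
  by (rule tens_eq_tensor_eval2[OF assms(3)])
    (simp_all add: assms(1,2) smul_add_right smul_add_left smul_zero_right smul_zero_left
      additive_zero[OF assms(1)] smul_smul[symmetric] mult.commute)

end

locale bialgebra_over =
  fixes smul :: "'k::comm_ring_1 \<Rightarrow> 'a::ring_1 \<Rightarrow> 'a"
    and Delta :: "'a \<Rightarrow> ('a \<times> 'a) list"
    and eps :: "'a \<Rightarrow> 'k"
  assumes bialgebra: "bialgebra smul Delta eps"
begin

sublocale algebra_over smul
  using bialgebra unfolding bialgebra_def by unfold_locales blast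

lemma Delta_add: "tens_eq smul (T2 (Delta (a + b))) (T2 (Delta a) @ T2 (Delta b))"
  and Delta_smul: "tens_eq smul (T2 (Delta (smul s a))) (map (\<lambda>(x, y). [smul s x, y]) (Delta a))"
  and eps_add: "eps (a + b) = eps a + eps b"
  and eps_smul: "eps (smul s a) = s * eps a"
  and Delta_coassoc: "tens_eq smul
        (concat (map (\<lambda>(x, y). map (\<lambda>(x1, x2). [x1, x2, y]) (Delta x)) (Delta a)))
        (concat (map (\<lambda>(x, y). map (\<lambda>(y1, y2). [x, y1, y2]) (Delta y)) (Delta a)))"
  and counit_left: "(\<Sum>(x, y)\<leftarrow>Delta a. smul (eps x) y) = a"
  and counit_right: "(\<Sum>(x, y)\<leftarrow>Delta a. smul (eps y) x) = a"
  and Delta_mult: "tens_eq smul (T2 (Delta (a * b)))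
        (concat (map (\<lambda>(x, y). map (\<lambda>(x', y'). [x * x', y * y']) (Delta b)) (Delta a)))"
  and eps_mult: "eps (a * b) = eps a * eps b"
  using bialgebra unfolding bialgebra_def by blast+

lemma incl_eq_sum_list_T2:
  "incl smul Delta f c = (\<Sum>l\<leftarrow>T2 (Delta c). tensor_eval2 (\<lambda>x y. smul (f y) x) l)"
  by (simp add: incl_def sum_list_tensor_eval2_T2)

lemma incl_mult:
  assumes f: "Der_Ak smul eps f"
  shows "incl smul Delta f (a * b) = incl smul Delta f a * b + a * incl smul Delta f b"
proof -
  note tens_eq_f = tens_eq_sum_list_incl[OF Der_Ak_add[OF f] Der_Ak_smul[OF f]]
  have "incl smul Delta f (a * b)
      = (\<Sum>p\<leftarrow>Delta a. \<Sum>q\<leftarrow>Delta b. smul (f (snd p * snd q)) (fst p * fst q))"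
    unfolding incl_eq_sum_list_T2 tens_eq_f[OF Delta_mult]
    by (simp add: sum_list_concat_map tensor_eval2_def case_prod_unfold o_def)
  also have "\<dots> = (\<Sum>p\<leftarrow>Delta a. \<Sum>q\<leftarrow>Delta b.
                    smul (f (snd p)) (fst p) * smul (eps (snd q)) (fst q)
                  + smul (eps (snd p)) (fst p) * smul (f (snd q)) (fst q))"
    by (simp add: Der_Ak_mult[OF f] smul_mult_smul smul_add_left)
  also have "\<dots> = (\<Sum>p\<leftarrow>Delta a. smul (f (snd p)) (fst p)) * (\<Sum>q\<leftarrow>Delta b. smul (eps (snd q)) (fst q))
                + (\<Sum>p\<leftarrow>Delta a. smul (eps (snd p)) (fst p)) * (\<Sum>q\<leftarrow>Delta b. smul (f (snd q)) (fst q))"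
    by (simp add: sum_list_addf sum_list_mult_sum_list)
  also have "\<dots> = incl smul Delta f a * b + a * incl smul Delta f b"
    using counit_right[of a] counit_right[of b] by (simp add: incl_def case_prod_unfold)
  finally show ?thesis .
qed

lemma Der_AA_incl:
  assumes f: "Der_Ak smul eps f"
  shows "Der_AA smul (incl smul Delta f)"
proof -
  note tens_eq_f = tens_eq_sum_list_incl[OF Der_Ak_add[OF f] Der_Ak_smul[OF f]]
  have "incl smul Delta f (a + b) = incl smul Delta f a + incl smul Delta f b" for a b
    unfolding incl_eq_sum_list_T2 tens_eq_f[OF Delta_add] by simp
  moreover have "incl smul Delta f (smul s a) = smul s (incl smul Delta f a)" for s a
    unfolding incl_eq_sum_list_T2 tens_eq_f[OF Delta_smul]
    by (simp add: T2_def sum_list_tensor_eval2_T2 smul_sum_list_right tensor_eval2_def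
        case_prod_unfold o_def smul_smul[symmetric] Der_Ak_smul[OF f] mult.commute)
  ultimately show ?thesis
    unfolding Der_AA_def using incl_mult[OF f] by blast
qed

lemma incl_incl:
  assumes f: "Der_Ak smul eps f" and g: "Der_Ak smul eps g"
  shows "incl smul Delta f (incl smul Delta g a) = incl smul Delta (circ1_k smul Delta f g) a"
proof -
  note f_add = Der_Ak_add[OF f] and g_add = Der_Ak_add[OF g]
  note incl_f_add = Der_AA_add[OF Der_AA_incl[OF f]]
  define h where "h = (\<lambda>p q r. smul (f q * g r) p)"
  have "incl smul Delta f (incl smul Delta g a)
      = (\<Sum>p\<leftarrow>Delta a. smul (g (snd p)) (incl smul Delta f (fst p)))"
    unfolding incl_def[of smul Delta g] case_prod_unfold additive_sum_list[OF incl_f_add]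
    by (simp add: Der_AA_smul[OF Der_AA_incl[OF f]])
  also have "\<dots> = (\<Sum>l\<leftarrow>concat (map (\<lambda>(x, y). map (\<lambda>(x1, x2). [x1, x2, y]) (Delta x)) (Delta a)).
                    tensor_eval3 h l)"
    by (simp add: sum_list_concat_map tensor_eval3_def h_def case_prod_unfold o_def incl_def
        smul_sum_list_right smul_smul[symmetric] mult.commute)
  also have "\<dots> = (\<Sum>l\<leftarrow>concat (map (\<lambda>(x, y). map (\<lambda>(y1, y2). [x, y1, y2]) (Delta y)) (Delta a)).
                    tensor_eval3 h l)"
    by (rule tens_eq_tensor_eval3[OF Delta_coassoc]; unfold h_def)
      (simp_all add: smul_add_right smul_add_left f_add g_add distrib_left distrib_right
        smul_zero_right smul_zero_left additive_zero[OF f_add] additive_zero[OF g_add]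
        Der_Ak_smul[OF f] Der_Ak_smul[OF g] smul_smul[symmetric] ac_simps)
  also have "\<dots> = incl smul Delta (circ1_k smul Delta f g) a"
    by (simp add: sum_list_concat_map tensor_eval3_def h_def case_prod_unfold o_def incl_def
        circ1_k_def additive_sum_list[OF f_add] Der_Ak_smul[OF f] smul_sum_list_left mult.commute)
  finally show ?thesis .
qed

lemma incl_brk_k:
  assumes "Der_Ak smul eps f" and "Der_Ak smul eps g"
  shows "incl smul Delta (brk_k smul Delta f g) = brk_A (incl smul Delta f) (incl smul Delta g)"
proof -
  have brk_k_eq: "brk_k smul Delta f g = (\<lambda>a. circ1_k smul Delta f g a - circ1_k smul Delta g f a)"
    by (simp add: fun_eq_iff brk_k_def)
  show ?thesis
    unfolding brk_k_eq incl_diff by (simp add: brk_A_def fun_eq_iff incl_incl[OF assms] incl_incl[OF assms(2,1)])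
qed

lemma eps_incl:
  assumes f: "Der_Ak smul eps f"
  shows "eps (incl smul Delta f a) = f a"
proof -
  have "eps (incl smul Delta f a) = (\<Sum>p\<leftarrow>Delta a. f (snd p) * eps (fst p))"
    unfolding incl_def case_prod_unfold additive_sum_list[of eps, OF eps_add]
    by (simp add: eps_smul)
  also have "\<dots> = f (\<Sum>p\<leftarrow>Delta a. smul (eps (fst p)) (snd p))"
    by (simp add: additive_sum_list[OF Der_Ak_add[OF f]] Der_Ak_smul[OF f] mult.commute)
  also have "\<dots> = f a"
    using counit_left[of a] by (simp add: case_prod_unfold)
  finally show ?thesis .
qed

lemma eps_inner_der:
  assumes "inner_der D"
  shows "eps (D a) = 0"
proof -
  obtain m where "D a = a * m - m * a"
    using assms unfolding inner_der_def by blast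
  then show ?thesis
    by (simp add: additive_diff[of eps, OF eps_add] eps_mult mult.commute)
qed

lemma hh1_eq_incl_imp_eq:
  assumes f: "Der_Ak smul eps f" and g: "Der_Ak smul eps g"
    and "hh1_eq (incl smul Delta f) (incl smul Delta g)"
  shows "f = g"
proof
  fix a
  have "eps (incl smul Delta f a - incl smul Delta g a) = 0"
    using eps_inner_der[of "\<lambda>a. incl smul Delta f a - incl smul Delta g a"] assms(3)
    unfolding hh1_eq_def by blast
  then show "f a = g a"
    by (simp add: additive_diff[of eps, OF eps_add] eps_incl[OF f] eps_incl[OF g])
qed

end

lemma lift1_eq_incl: "lift1 smul Delta = incl smul Delta"
  by (simp add: fun_eq_iff lift1_def incl_def)

theorem mainTheorem4:
  fixes smul :: "'k::comm_ring_1 \<Rightarrow> 'a::ring_1 \<Rightarrow> 'a"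
    and Delta :: "'a \<Rightarrow> ('a \<times> 'a) list"
    and eps :: "'a \<Rightarrow> 'k"
  assumes "bialgebra smul Delta eps"
  shows
    "(\<forall>f. Der_Ak smul eps f \<longrightarrow> Der_AA smul (incl smul Delta f))
     \<and> (\<forall>f g. Der_Ak smul eps f \<and> Der_Ak smul eps g \<longrightarrow>
          incl smul Delta (\<lambda>a. f a + g a) = (\<lambda>a. incl smul Delta f a + incl smul Delta g a))
     \<and> (\<forall>f s. Der_Ak smul eps f \<longrightarrow>
          incl smul Delta (\<lambda>a. s * f a) = (\<lambda>a. smul s (incl smul Delta f a)))
     \<and> (\<forall>f g. Der_Ak smul eps f \<and> Der_Ak smul eps g \<longrightarrow>
          incl smul Delta (brk_k smul Delta f g) = brk_A (incl smul Delta f) (incl smul Delta g))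
     \<and> (\<forall>D E D' E'. Der_AA smul D \<and> Der_AA smul E \<and> Der_AA smul D' \<and> Der_AA smul E' \<and>
          hh1_eq D D' \<and> hh1_eq E E' \<longrightarrow> hh1_eq (brk_A D E) (brk_A D' E'))
     \<and> (\<forall>f. Der_Ak smul eps f \<longrightarrow> hh1_eq (lift1 smul Delta f) (incl smul Delta f))
     \<and> (\<forall>f g. Der_Ak smul eps f \<and> Der_Ak smul eps g \<and>
          hh1_eq (incl smul Delta f) (incl smul Delta g) \<longrightarrow> f = g)"
proof -
  interpret bialgebra_over smul Delta eps by (rule bialgebra_over.intro[OF assms])
  show ?thesis
    using Der_AA_incl incl_add incl_scale incl_brk_k hh1_eq_brk_A hh1_eq_incl_imp_eq
    by (simp add: lift1_eq_incl hh1_eq_refl) blast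
qed

end
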